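(* Let $[Z_i(\tau_i,u_i)]_{i=1}^N$ be per-agent return distributions with quantile functions $\theta_i(\tau_i,u_i,w)$, let $\alpha\in(0,1]$, let $\bar u_i=\arg\max_{u_i}\mathrm{VaR}_\alpha[Z_i(\tau_i,u_i)]$ and $\bar{\boldsymbol u}=(\bar u_1,\dots,\bar u_N)$, let $Q_{mix}:\mathbb{R}^N\to\mathbb{R}$ be nondecreasing in each argument (not depending on $\boldsymbol u$), let $\theta_r(\boldsymbol\tau,\boldsymbol u,w)\le0$ for all $\boldsymbol u,w$, and let the mask be $m_\alpha(\boldsymbol\tau,\boldsymbol u)=0$ if $\boldsymbol u=\bar{\boldsymbol u}$ and $1$ otherwise. Let $Z_{jt}(\boldsymbol\tau,\boldsymbol u)$ be a joint return distribution (e.g. represented as a Dirac mixture $\sum_{j=1}^J p_j(\boldsymbol\tau,\boldsymbol u)\delta_{\theta(\boldsymbol\tau,\boldsymbol u,w_j)}$) whose quantile function is $$\theta(\boldsymbol\tau,\boldsymbol u,w)=Q_{mix}(\theta_1(\tau_1,u_1,w),\dots,\theta_N(\tau_N,u_N,w))+m_\alpha(\boldsymbol\tau,\boldsymbol u)\,\theta_r(\boldsymbol\tau,\boldsymbol u,w),\qquad w\in(0,1].$$ Then $[Z_i]_{i=1}^N$ satisfy the RIGM principle for $Z_{jt}$ with risk metric $\mathrm{VaR}_\alpha$, i.e. $\arg\max_{\boldsymbol u}\mathrm{VaR}_\alpha[Z_{jt}(\boldsymbol\tau,\boldsymbol u)]=\bar{\boldsymbol u}$.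
   Context: There are $N$ agents; agent $i$ has observation history $\tau_i$ and finite action set $U_i$; $\boldsymbol\tau=(\tau_1,\dots,\tau_N)$, $\boldsymbol u=(u_1,\dots,u_N)$. For a real random variable $Z$ with CDF $F_Z$, its quantile function is $\theta_Z(\omega)=\inf\{z\in\mathbb{R}:\omega\le F_Z(z)\}$, $\omega\in(0,1]$, and $\mathrm{VaR}_\alpha(Z)=\theta_Z(\alpha)$. RIGM principle: $\arg\max_{\boldsymbol u}\mathrm{VaR}_\alpha[Z_{jt}(\boldsymbol\tau,\boldsymbol u)]=(\arg\max_{u_1}\mathrm{VaR}_\alpha[Z_1(\tau_1,u_1)],\dots,\arg\max_{u_N}\mathrm{VaR}_\alpha[Z_N(\tau_N,u_N)])$. Standing assumption of the paper: argmax sets are singletons (ties broken by smallest index). *)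

theory Defs
  imports "HOL-Probability.Probability"
begin

definition quantile :: "real measure \<Rightarrow> real \<Rightarrow> real" where
  "quantile M w = Inf {z. w \<le> cdf M z}"

definition VaR :: "real \<Rightarrow> real measure \<Rightarrow> real" where
  "VaR \<alpha> M = quantile M \<alpha>"

definition argmax_on :: "('a \<Rightarrow> real) \<Rightarrow> 'a set \<Rightarrow> 'a set" where
  "argmax_on f S = {x \<in> S. \<forall>y \<in> S. f y \<le> f x}"

end

theory Submission
  imports Defs
begin

text \<open>At \<alpha> the joint quantile is Qmix of the per-agent VaRs plus a masked penalty. Since Qmix is
  monotone and every agent's VaR is maximal at ubar, the first summand is maximal at ubar; the
  penalty is nonpositive and switched off exactly at ubar. So ubar is a joint maximiser, and the
  uniqueness hypothesis turns this into equality of the argmax set.\<close>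

lemma argmax_on_eq_singleton:
  assumes "x \<in> argmax_on f S" and "is_singleton (argmax_on f S)"
  shows "argmax_on f S = {x}"
  using assms by (metis is_singletonE singletonD)

lemma componentwise_argmax_in_argmax_on:
  fixes Q :: "('n \<Rightarrow> real) \<Rightarrow> real"
  assumes Q_mono: "mono Q"
    and ubar_max: "\<And>i. ubar i \<in> argmax_on (g i) (U i)"
    and f_le: "\<And>u. (\<forall>i. u i \<in> U i) \<Longrightarrow> f u \<le> Q (\<lambda>i. g i (u i))"
    and f_ubar: "f ubar = Q (\<lambda>i. g i (ubar i))"
  shows "ubar \<in> argmax_on f {u. \<forall>i. u i \<in> U i}"
proof -
  have ubar_in: "\<forall>i. ubar i \<in> U i"
    using ubar_max by (simp add: argmax_on_def)
  have "f u \<le> f ubar" if u: "\<forall>i. u i \<in> U i" for u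
  proof -
    have "(\<lambda>i. g i (u i)) \<le> (\<lambda>i. g i (ubar i))"
      using ubar_max u by (simp add: argmax_on_def le_fun_def)
    then have "Q (\<lambda>i. g i (u i)) \<le> Q (\<lambda>i. g i (ubar i))"
      by (rule monoD[OF Q_mono])
    then show ?thesis
      using f_le[OF u] f_ubar by linarith
  qed
  then show ?thesis
    using ubar_in by (simp add: argmax_on_def)
qed

theorem theorem7:
  fixes U :: "'n::finite \<Rightarrow> 'a set"
    and \<tau> :: "'n \<Rightarrow> 'o"
    and Zi :: "'n \<Rightarrow> 'o \<Rightarrow> 'a \<Rightarrow> real measure"
    and \<theta>i :: "'n \<Rightarrow> 'o \<Rightarrow> 'a \<Rightarrow> real \<Rightarrow> real"
    and Zjt :: "('n \<Rightarrow> 'o) \<Rightarrow> ('n \<Rightarrow> 'a) \<Rightarrow> real measure"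
    and \<theta>r :: "('n \<Rightarrow> 'o) \<Rightarrow> ('n \<Rightarrow> 'a) \<Rightarrow> real \<Rightarrow> real"
    and Qmix :: "('n \<Rightarrow> real) \<Rightarrow> real"
    and ubar :: "'n \<Rightarrow> 'a"
    and \<alpha> :: real
  assumes U_fin: "\<And>i. finite (U i)"
    and U_ne: "\<And>i. U i \<noteq> {}"
    and alpha: "0 < \<alpha>" "\<alpha> \<le> 1"
    and Zi_prob: "\<And>i a. a \<in> U i \<Longrightarrow> prob_space (Zi i (\<tau> i) a) \<and> sets (Zi i (\<tau> i) a) = sets borel"
    and Zi_quantile: "\<And>i a w. a \<in> U i \<Longrightarrow> 0 < w \<Longrightarrow> w \<le> 1 \<Longrightarrow>
        quantile (Zi i (\<tau> i) a) w = \<theta>i i (\<tau> i) a w"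
    and ubar_def: "\<And>i. argmax_on (\<lambda>a. VaR \<alpha> (Zi i (\<tau> i) a)) (U i) = {ubar i}"
    and Qmix_mono: "mono Qmix"
    and \<theta>r_nonpos: "\<And>u w. \<theta>r \<tau> u w \<le> 0"
    and Zjt_prob: "\<And>u. (\<forall>i. u i \<in> U i) \<Longrightarrow> prob_space (Zjt \<tau> u) \<and> sets (Zjt \<tau> u) = sets borel"
    and Zjt_quantile: "\<And>u w. (\<forall>i. u i \<in> U i) \<Longrightarrow> 0 < w \<Longrightarrow> w \<le> 1 \<Longrightarrow>
        quantile (Zjt \<tau> u) w =
          Qmix (\<lambda>i. \<theta>i i (\<tau> i) (u i) w) + (if u = ubar then 0 else 1) * \<theta>r \<tau> u w"
    and joint_singleton: "is_singleton (argmax_on (\<lambda>u. VaR \<alpha> (Zjt \<tau> u)) {u. \<forall>i. u i \<in> U i})"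
  shows "argmax_on (\<lambda>u. VaR \<alpha> (Zjt \<tau> u)) {u. \<forall>i. u i \<in> U i} = {ubar}"
proof -
  define g where "g i a = VaR \<alpha> (Zi i (\<tau> i) a)" for i a
  have ubar_max: "ubar i \<in> argmax_on (g i) (U i)" for i
    using ubar_def[of i] by (simp add: g_def[abs_def])
  have VaR_joint: "VaR \<alpha> (Zjt \<tau> u) =
      Qmix (\<lambda>i. g i (u i)) + (if u = ubar then 0 else 1) * \<theta>r \<tau> u \<alpha>"
    if "\<forall>i. u i \<in> U i" for u
    using that alpha by (simp add: g_def VaR_def Zjt_quantile Zi_quantile)
  have "ubar \<in> argmax_on (\<lambda>u. VaR \<alpha> (Zjt \<tau> u)) {u. \<forall>i. u i \<in> U i}"
  proof (rule componentwise_argmax_in_argmax_on[OF Qmix_mono ubar_max])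
    show "VaR \<alpha> (Zjt \<tau> u) \<le> Qmix (\<lambda>i. g i (u i))" if "\<forall>i. u i \<in> U i" for u
      using VaR_joint[OF that] \<theta>r_nonpos[of u \<alpha>] by simp
    show "VaR \<alpha> (Zjt \<tau> ubar) = Qmix (\<lambda>i. g i (ubar i))"
      using VaR_joint ubar_max by (simp add: argmax_on_def)
  qed
  then show ?thesis
    using joint_singleton by (rule argmax_on_eq_singleton)
qed

end
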